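(* For any integer $m\ge1$ and any $d\ge2$, there is a pool $S_u\subseteq\mathbb{R}_+^d$ of size $m$ whose auditing complexity with respect to $\mathcal{H}_\Box^-$ is $m$.
   Context: For $\mathbf a\in\mathbb{R}_+^d$, $h_{\mathbf a}(x)=2\mathbb{I}[\exists i\in[d],\ x[i]\ge a[i]]-1$ and $h^-_{\mathbf a}=-h_{\mathbf a}$; $\mathcal{H}_\Box^-=\{h^-_{\mathbf a}:\mathbf a\in\mathbb{R}_+^d\}$ (negatives outside the rectangle). The auditing complexity of a finite unlabeled pool $S_u$ with respect to a class $\mathcal{H}$ is the minimum, over algorithms that sequentially query labels of points of $S_u$ and that for every labeling of $S_u$ consistent with some $h\in\mathcal{H}$ output (with probability 1) a hypothesis with zero error on the labeled pool, of the worst case (over such labelings) number of queried points whose label is $-1$. *)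

theory Defs
  imports "HOL-Analysis.Analysis"
begin

definition nonneg_orthant :: "(real ^ 'd) set" where
  "nonneg_orthant = {x. \<forall>i. x $ i \<ge> 0}"

definition h_box :: "real ^ 'd \<Rightarrow> real ^ 'd \<Rightarrow> int" where
  "h_box a x = (if \<exists>i. x $ i \<ge> a $ i then 1 else -1)"

definition h_box_neg :: "real ^ 'd \<Rightarrow> real ^ 'd \<Rightarrow> int" where
  "h_box_neg a x = - h_box a x"

definition H_box_neg :: "(real ^ 'd \<Rightarrow> int) set" where
  "H_box_neg = {h_box_neg a | a. a \<in> nonneg_orthant}"

text \<open>Deterministic adaptive label-query algorithms as finite decision trees:
  either output a hypothesis, or query a point and continue in the branch
  for label +1 (first subtree) or label -1 (second subtree).\<close>
datatype 'x qtree = Output "'x \<Rightarrow> int" | Query 'x "'x qtree" "'x qtree"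

fun run :: "'x qtree \<Rightarrow> ('x \<Rightarrow> int) \<Rightarrow> 'x set \<times> ('x \<Rightarrow> int)" where
  "run (Output g) L = ({}, g)"
| "run (Query x tp tn) L =
     (let (Q, g) = run (if L x = 1 then tp else tn) L in (insert x Q, g))"

definition correct_auditor :: "'x set \<Rightarrow> ('x \<Rightarrow> int) set \<Rightarrow> 'x qtree \<Rightarrow> bool" where
  "correct_auditor S H T \<longleftrightarrow>
     (\<forall>h\<in>H. fst (run T h) \<subseteq> S \<and> (\<forall>x\<in>S. snd (run T h) x = h x))"

definition neg_queries :: "'x qtree \<Rightarrow> ('x \<Rightarrow> int) \<Rightarrow> nat" where
  "neg_queries T h = card {x \<in> fst (run T h). h x = -1}"

definition auditing_complexity :: "'x set \<Rightarrow> ('x \<Rightarrow> int) set \<Rightarrow> nat" where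
  "auditing_complexity S H =
     (LEAST k. \<exists>T. correct_auditor S H T \<and> (\<forall>h\<in>H. neg_queries T h \<le> k))"

end

theory Submission
  imports Defs
begin

text \<open>Take the staircase p k = k e_i + (m - k) e_j, k < m, in the plane of two coordinate
  axes. All its points are negative under the degenerate rectangle with corner 0, whereas the
  rectangle with corner p k + 1 contains p k and no other staircase point. So for each pool
  point some hypothesis of the class differs from the all-negative labelling exactly there.
  A correct auditor run on the all-negative labelling must then query every point, since it
  could not otherwise tell the two labellings apart, and each such query is negative.
  Querying the whole pool shows that m negative queries also suffice.\<close>

lemma finite_fst_run: "finite (fst (run T h))"
  by (induction T) (auto split: prod.splits)

lemma run_cong:
  assumes "\<forall>x\<in>fst (run T h). h' x = h x"
  shows "run T h' = run T h"
  using assms by (induction T) (auto split: prod.splits if_splits)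

fun query_all :: "'x list \<Rightarrow> ('x \<Rightarrow> int) \<Rightarrow> 'x qtree" where
  "query_all [] g = Output g"
| "query_all (x # xs) g = Query x (query_all xs (g(x := 1))) (query_all xs (g(x := -1)))"

lemma run_query_all:
  "\<forall>x\<in>set xs. h x = 1 \<or> h x = -1 \<Longrightarrow>
   run (query_all xs g) h = (set xs, \<lambda>y. if y \<in> set xs then h y else g y)"
proof (induction xs arbitrary: g)
  case (Cons x xs)
  then consider "h x = 1" | "h x \<noteq> 1" "h x = -1" by auto
  then show ?case
    by cases (use Cons in \<open>auto simp: fun_eq_iff\<close>)
qed simp

lemma exists_auditor_querying_all:
  assumes "finite S" and "\<forall>h\<in>H. \<forall>x\<in>S. h x = 1 \<or> h x = -1"
  shows "\<exists>T. correct_auditor S H T \<and> (\<forall>h\<in>H. neg_queries T h \<le> card S)"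
proof -
  obtain xs where xs: "set xs = S" using finite_list[OF assms(1)] by blast
  define T :: "'a qtree" where "T = query_all xs (\<lambda>_. 0)"
  have run_T: "fst (run T h) = S" "\<forall>x\<in>S. snd (run T h) x = h x" if "h \<in> H" for h
    using run_query_all[of xs h "\<lambda>_. 0"] assms(2) that xs by (simp_all add: T_def)
  have "neg_queries T h \<le> card S" if "h \<in> H" for h
    unfolding neg_queries_def run_T(1)[OF that] by (rule card_mono) (auto simp: assms(1))
  moreover have "correct_auditor S H T"
    using run_T by (simp add: correct_auditor_def)
  ultimately show ?thesis by blast
qed

lemma correct_auditor_queries_distinguished_point:
  assumes T: "correct_auditor S H T" and "h0 \<in> H" "h \<in> H" "x \<in> S"
    and "h x \<noteq> h0 x" and "\<forall>y\<in>S - {x}. h y = h0 y"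
  shows "x \<in> fst (run T h0)"
proof (rule ccontr)
  assume x_unqueried: "x \<notin> fst (run T h0)"
  have "fst (run T h0) \<subseteq> S" using T \<open>h0 \<in> H\<close> by (simp add: correct_auditor_def)
  with x_unqueried assms(6) have "run T h = run T h0" by (intro run_cong) auto
  with T \<open>h0 \<in> H\<close> \<open>h \<in> H\<close> \<open>x \<in> S\<close> have "h x = h0 x"
    unfolding correct_auditor_def by metis
  with \<open>h x \<noteq> h0 x\<close> show False ..
qed

lemma card_le_neg_queries:
  assumes T: "correct_auditor S H T" and "h0 \<in> H" and "\<forall>x\<in>S. h0 x = -1"
    and flips: "\<forall>x\<in>S. \<exists>h\<in>H. h x \<noteq> h0 x \<and> (\<forall>y\<in>S - {x}. h y = h0 y)"
  shows "card S \<le> neg_queries T h0"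
proof -
  have "S \<subseteq> fst (run T h0)"
    using correct_auditor_queries_distinguished_point[OF T \<open>h0 \<in> H\<close>] flips by blast
  with assms(3) have "S \<subseteq> {x \<in> fst (run T h0). h0 x = -1}" by blast
  then show ?thesis
    unfolding neg_queries_def by (rule card_mono[rotated]) (simp add: finite_fst_run)
qed

lemma auditing_complexity_eq_card:
  assumes "finite S" and "\<forall>h\<in>H. \<forall>x\<in>S. h x = 1 \<or> h x = -1"
    and "h0 \<in> H" and "\<forall>x\<in>S. h0 x = -1"
    and "\<forall>x\<in>S. \<exists>h\<in>H. h x \<noteq> h0 x \<and> (\<forall>y\<in>S - {x}. h y = h0 y)"
  shows "auditing_complexity S H = card S"
  unfolding auditing_complexity_def
proof (rule Least_equality)
  show "\<exists>T. correct_auditor S H T \<and> (\<forall>h\<in>H. neg_queries T h \<le> card S)"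
    using exists_auditor_querying_all[OF assms(1,2)] .
next
  fix k assume "\<exists>T. correct_auditor S H T \<and> (\<forall>h\<in>H. neg_queries T h \<le> k)"
  then obtain T where "correct_auditor S H T" "neg_queries T h0 \<le> k"
    using \<open>h0 \<in> H\<close> by blast
  with card_le_neg_queries[of S H T h0] assms(3-5) show "card S \<le> k" by linarith
qed

lemma h_box_neg_eq_one_iff: "h_box_neg a x = 1 \<longleftrightarrow> (\<forall>i. x $ i < a $ i)"
  by (simp add: h_box_neg_def h_box_def not_le[symmetric])

lemma H_box_neg_values: "h \<in> H_box_neg \<Longrightarrow> h x = 1 \<or> h x = -1"
  by (auto simp: H_box_neg_def h_box_neg_def h_box_def split: if_splits)

lemma h_box_neg_zero: "x \<in> nonneg_orthant \<Longrightarrow> h_box_neg 0 x = -1"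
  by (auto simp: nonneg_orthant_def h_box_neg_def h_box_def)

definition stair_point :: "'d \<Rightarrow> 'd \<Rightarrow> nat \<Rightarrow> nat \<Rightarrow> real ^ 'd" where
  "stair_point i j m k = (\<chi> l. if l = i then real k else if l = j then real m - real k else 0)"

lemma inj_stair_point: "inj (stair_point i j m)"
proof (rule injI)
  fix k l assume "stair_point i j m k = stair_point i j m l"
  then have "stair_point i j m k $ i = stair_point i j m l $ i" by simp
  then show "k = l" by (simp add: stair_point_def)
qed

lemma stair_point_in_nonneg_orthant: "k \<le> m \<Longrightarrow> stair_point i j m k \<in> nonneg_orthant"
  by (simp add: stair_point_def nonneg_orthant_def)

lemma stair_corner_in_nonneg_orthant: "k \<le> m \<Longrightarrow> stair_point i j m k + 1 \<in> nonneg_orthant"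
  by (simp add: stair_point_def nonneg_orthant_def)

text \<open>A later point is cut off by coordinate i, an earlier one by coordinate j.\<close>
lemma h_box_neg_stair:
  assumes "i \<noteq> j"
  shows "h_box_neg (stair_point i j m k + 1) (stair_point i j m l) = (if l = k then 1 else -1)"
proof (cases "l = k")
  case False
  then have "stair_point i j m l $ i \<ge> real k + 1 \<or> stair_point i j m l $ j \<ge> real m - real k + 1"
    using assms by (auto simp: stair_point_def)
  with False assms show ?thesis
    by (auto simp: h_box_neg_def h_box_def stair_point_def)
qed (simp add: h_box_neg_eq_one_iff stair_point_def)

lemma stair_pool_subset_nonneg_orthant: "stair_point i j m ` {..<m} \<subseteq> nonneg_orthant"
  by (auto intro: stair_point_in_nonneg_orthant)

lemma stair_pool_flips:
  fixes i j :: "'d::finite" and m :: nat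
  assumes "i \<noteq> j"
  defines "S \<equiv> stair_point i j m ` {..<m}"
  shows "\<forall>x\<in>S. \<exists>h\<in>H_box_neg. h x \<noteq> h_box_neg 0 x \<and> (\<forall>y\<in>S - {x}. h y = h_box_neg 0 y)"
proof
  fix x assume "x \<in> S"
  then obtain k where "k < m" and x: "x = stair_point i j m k" by (auto simp: S_def)
  let ?h = "h_box_neg (stair_point i j m k + 1)"
  have "?h \<in> H_box_neg"
    using stair_corner_in_nonneg_orthant[of k m] \<open>k < m\<close> by (auto simp: H_box_neg_def)
  moreover have "?h y = (if y = x then 1 else -1)" if "y \<in> S" for y
    using that h_box_neg_stair[OF assms(1)] x by (auto simp: S_def)
  moreover have "h_box_neg 0 y = -1" if "y \<in> S" for y
    using that by (auto simp: S_def intro!: h_box_neg_zero stair_point_in_nonneg_orthant)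
  ultimately show "\<exists>h\<in>H_box_neg. h x \<noteq> h_box_neg 0 x \<and> (\<forall>y\<in>S - {x}. h y = h_box_neg 0 y)"
    using \<open>x \<in> S\<close> by (intro bexI) auto
qed

theorem theorem4:
  fixes m :: nat
  assumes "m \<ge> 1" and "CARD('d::finite) \<ge> 2"
  shows "\<exists>S :: (real ^ 'd) set. finite S \<and> card S = m \<and> S \<subseteq> nonneg_orthant \<and>
           auditing_complexity S (H_box_neg :: (real ^ 'd \<Rightarrow> int) set) = m"
proof -
  obtain i j :: 'd where "i \<noteq> j"
    using assms(2) card_le_Suc0_iff_eq[of "UNIV :: 'd set"] by fastforce
  define S where "S = stair_point i j m ` {..<m}"
  have card_S: "card S = m"
    by (simp add: S_def card_image inj_on_subset[OF inj_stair_point])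
  have S_orthant: "S \<subseteq> nonneg_orthant"
    unfolding S_def by (rule stair_pool_subset_nonneg_orthant)
  have all_negative_in_class: "h_box_neg 0 \<in> H_box_neg"
    by (auto simp: H_box_neg_def nonneg_orthant_def)
  have "auditing_complexity S H_box_neg = card S"
  proof (rule auditing_complexity_eq_card[OF _ _ all_negative_in_class])
    show "\<forall>x\<in>S. h_box_neg 0 x = -1"
      using S_orthant h_box_neg_zero by blast
  qed (use H_box_neg_values stair_pool_flips[OF \<open>i \<noteq> j\<close>] in \<open>auto simp: S_def\<close>)
  with card_S S_orthant show ?thesis by (auto simp: S_def)
qed

end
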